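(* (i) If the language $L(\mathcal{A})$ accepted by the NFA $\mathcal{A}$ is finite, then $\mathcal{H}_\kappa(L_1,L_2)$ is regular. (ii) If $L(\mathcal{A})$ is infinite and either $L_1$ is finite or $L_2$ is finite, then $\mathcal{H}_\kappa(L_1,L_2)$ is not regular.
   Context: $\Sigma$ is a finite alphabet with at least two letters with an involution $a\mapsto\bar a$ ($\bar{\bar a}=a$), extended to words by $\overline{a_1\cdots a_m}=\bar a_m\cdots\bar a_1$ and to languages elementwise. $\kappa$ is a fixed positive integer. $\mathcal{H}_\kappa(L_1,L_2)=\{\gamma\alpha\beta\bar\alpha\bar\gamma:|\alpha|\ge\kappa,\ \gamma\alpha\beta\bar\alpha\in L_1\text{ or }\alpha\beta\bar\alpha\bar\gamma\in L_2\}$. $L_1,L_2$ are regular; $\mathcal{A}_1=(Q_1,\Sigma,E_1,\{q_{01}\},F_1)$ is a complete DFA accepting $L_1$, $\mathcal{A}_2=(Q_2,\Sigma,E_2,\{q_{02}\},F_2)$ a complete DFA accepting $\overline{L_2}$; $p\cdot w$ is the state reached from $p$ on $w$. Construction of $\mathcal{A}$: $Q_{12}=\{(q_{01}\cdot w,q_{02}\cdot w):w\in\Sigma^*\}$ with $(p_1,p_2)\cdot w=(p_1\cdot w,p_2\cdot w)$. For $(p_1,p_2,q_1,q_2)\in Q_1\times Q_2\times Q_1\times Q_2$ let $B(p_1,p_2,q_1,q_2)=\{w:p_1\cdot w=q_1,\ p_2\cdot\bar w=q_2\}$; the quadruple is a basic bridge if this set is nonempty. States of $\mathcal{A}$ are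 all $((p_1,p_2),q_1,q_2,\ell)$ with $(p_1,p_2)\in Q_{12}$, $q_i\in Q_i$, $\ell\in\{0,\dots,\kappa\}$, $(p_1,p_2,q_1,q_2)$ a basic bridge. For $a\in\Sigma$, $P\in Q_{12}$, $q_i\in Q_i$, there is an $a$-arc from $(P,q_1\cdot\bar a,q_2\cdot\bar a,\ell)$ to $(P\cdot a,q_1,q_2,\ell')$, provided both are states, exactly when: $\ell=\ell'=0$ and $q_1\cdot\bar a\notin F_1$, $q_2\cdot\bar a\notin F_2$; or $\ell=0,\ell'=1$ and ($q_1\cdot\bar a\in F_1$ or $q_2\cdot\bar a\in F_2$); or $1\le\ell<\kappa$ and $\ell'=\ell+1$. Initial states: $((q_{01},q_{02}),q_1',q_2',0)$; final states: those with $\ell=\kappa$. Finally, $\mathcal{A}$ is trimmed: states not reachable from an initial state, or from which no final state is reachable, are removed. *)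

theory Defs
  imports Main
begin

definition bar_word :: "('a \<Rightarrow> 'a) \<Rightarrow> 'a list \<Rightarrow> 'a list" where
  "bar_word bar w = rev (map bar w)"

definition bar_lang :: "('a \<Rightarrow> 'a) \<Rightarrow> 'a list set \<Rightarrow> 'a list set" where
  "bar_lang bar L = bar_word bar ` L"

definition hairpin :: "('a \<Rightarrow> 'a) \<Rightarrow> nat \<Rightarrow> 'a list set \<Rightarrow> 'a list set \<Rightarrow> 'a list set" where
  "hairpin bar \<kappa> L1 L2 =
     {\<gamma> @ \<alpha> @ \<beta> @ bar_word bar \<alpha> @ bar_word bar \<gamma> | \<gamma> \<alpha> \<beta>.
        length \<alpha> \<ge> \<kappa> \<and>
        (\<gamma> @ \<alpha> @ \<beta> @ bar_word bar \<alpha> \<in> L1 \<or> \<alpha> @ \<beta> @ bar_word bar \<alpha> @ bar_word bar \<gamma> \<in> L2)}"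

definition complete_dfa :: "'s set \<Rightarrow> ('s \<Rightarrow> 'a \<Rightarrow> 's) \<Rightarrow> 's \<Rightarrow> 's set \<Rightarrow> bool" where
  "complete_dfa Q \<delta> q0 F \<longleftrightarrow> finite Q \<and> q0 \<in> Q \<and> F \<subseteq> Q \<and> (\<forall>q\<in>Q. \<forall>a. \<delta> q a \<in> Q)"

definition dstep :: "('s \<Rightarrow> 'a \<Rightarrow> 's) \<Rightarrow> 's \<Rightarrow> 'a list \<Rightarrow> 's" where
  "dstep \<delta> p w = foldl \<delta> p w"

definition dfa_lang :: "('s \<Rightarrow> 'a \<Rightarrow> 's) \<Rightarrow> 's \<Rightarrow> 's set \<Rightarrow> 'a list set" where
  "dfa_lang \<delta> q0 F = {w. dstep \<delta> q0 w \<in> F}"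

definition regular :: "'a list set \<Rightarrow> bool" where
  "regular L \<longleftrightarrow> (\<exists>(Q::nat set) \<delta> q0 F. complete_dfa Q \<delta> q0 F \<and> dfa_lang \<delta> q0 F = L)"

fun nfa_path :: "('q \<Rightarrow> 'a \<Rightarrow> 'q \<Rightarrow> bool) \<Rightarrow> 'q \<Rightarrow> 'a list \<Rightarrow> 'q \<Rightarrow> bool" where
  "nfa_path \<delta> p [] q = (p = q)"
| "nfa_path \<delta> p (a # w) q = (\<exists>r. \<delta> p a r \<and> nfa_path \<delta> r w q)"

definition restr :: "'q set \<Rightarrow> ('q \<Rightarrow> 'a \<Rightarrow> 'q \<Rightarrow> bool) \<Rightarrow> 'q \<Rightarrow> 'a \<Rightarrow> 'q \<Rightarrow> bool" where
  "restr S \<delta> p a r \<longleftrightarrow> p \<in> S \<and> r \<in> S \<and> \<delta> p a r"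

definition nfa_lang :: "'q set \<Rightarrow> ('q \<Rightarrow> 'a \<Rightarrow> 'q \<Rightarrow> bool) \<Rightarrow> 'q set \<Rightarrow> 'q set \<Rightarrow> 'a list set" where
  "nfa_lang S \<delta> I F = {w. \<exists>p \<in> I \<inter> S. \<exists>q \<in> F \<inter> S. nfa_path (restr S \<delta>) p w q}"

definition trim_states :: "'q set \<Rightarrow> ('q \<Rightarrow> 'a \<Rightarrow> 'q \<Rightarrow> bool) \<Rightarrow> 'q set \<Rightarrow> 'q set \<Rightarrow> 'q set" where
  "trim_states S \<delta> I F =
     {s \<in> S. (\<exists>p \<in> I \<inter> S. \<exists>w. nfa_path (restr S \<delta>) p w s) \<and>
             (\<exists>q \<in> F \<inter> S. \<exists>w. nfa_path (restr S \<delta>) s w q)}"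

definition Q12 :: "('s1 \<Rightarrow> 'a \<Rightarrow> 's1) \<Rightarrow> 's1 \<Rightarrow> ('s2 \<Rightarrow> 'a \<Rightarrow> 's2) \<Rightarrow> 's2 \<Rightarrow> ('s1 \<times> 's2) set" where
  "Q12 \<delta>1 q01 \<delta>2 q02 = {(dstep \<delta>1 q01 w, dstep \<delta>2 q02 w) | w. True}"

definition basic_bridge :: "('a \<Rightarrow> 'a) \<Rightarrow> ('s1 \<Rightarrow> 'a \<Rightarrow> 's1) \<Rightarrow> ('s2 \<Rightarrow> 'a \<Rightarrow> 's2)
    \<Rightarrow> 's1 \<Rightarrow> 's2 \<Rightarrow> 's1 \<Rightarrow> 's2 \<Rightarrow> bool" where
  "basic_bridge bar \<delta>1 \<delta>2 p1 p2 q1 q2 \<longleftrightarrow>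
     (\<exists>w. dstep \<delta>1 p1 w = q1 \<and> dstep \<delta>2 p2 (bar_word bar w) = q2)"

type_synonym ('s1, 's2) astate = "('s1 \<times> 's2) \<times> 's1 \<times> 's2 \<times> nat"

definition A_states :: "('a \<Rightarrow> 'a) \<Rightarrow> nat \<Rightarrow> 's1 set \<Rightarrow> ('s1 \<Rightarrow> 'a \<Rightarrow> 's1) \<Rightarrow> 's1
    \<Rightarrow> 's2 set \<Rightarrow> ('s2 \<Rightarrow> 'a \<Rightarrow> 's2) \<Rightarrow> 's2 \<Rightarrow> ('s1, 's2) astate set" where
  "A_states bar \<kappa> Q1 \<delta>1 q01 Q2 \<delta>2 q02 =
     {((p1, p2), q1, q2, l) | p1 p2 q1 q2 l.
        (p1, p2) \<in> Q12 \<delta>1 q01 \<delta>2 q02 \<and> q1 \<in> Q1 \<and> q2 \<in> Q2 \<and> l \<le> \<kappa> \<and>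
        basic_bridge bar \<delta>1 \<delta>2 p1 p2 q1 q2}"

definition A_trans :: "('a \<Rightarrow> 'a) \<Rightarrow> nat \<Rightarrow> 's1 set \<Rightarrow> ('s1 \<Rightarrow> 'a \<Rightarrow> 's1) \<Rightarrow> 's1 \<Rightarrow> 's1 set
    \<Rightarrow> 's2 set \<Rightarrow> ('s2 \<Rightarrow> 'a \<Rightarrow> 's2) \<Rightarrow> 's2 \<Rightarrow> 's2 set
    \<Rightarrow> ('s1, 's2) astate \<Rightarrow> 'a \<Rightarrow> ('s1, 's2) astate \<Rightarrow> bool" where
  "A_trans bar \<kappa> Q1 \<delta>1 q01 F1 Q2 \<delta>2 q02 F2 s a t \<longleftrightarrow>
     s \<in> A_states bar \<kappa> Q1 \<delta>1 q01 Q2 \<delta>2 q02 \<and> t \<in> A_states bar \<kappa> Q1 \<delta>1 q01 Q2 \<delta>2 q02 \<and>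
     (\<exists>p1 p2 q1 q2 l l'. q1 \<in> Q1 \<and> q2 \<in> Q2 \<and>
        s = ((p1, p2), \<delta>1 q1 (bar a), \<delta>2 q2 (bar a), l) \<and>
        t = ((\<delta>1 p1 a, \<delta>2 p2 a), q1, q2, l') \<and>
        ((l = 0 \<and> l' = 0 \<and> \<delta>1 q1 (bar a) \<notin> F1 \<and> \<delta>2 q2 (bar a) \<notin> F2) \<or>
         (l = 0 \<and> l' = 1 \<and> (\<delta>1 q1 (bar a) \<in> F1 \<or> \<delta>2 q2 (bar a) \<in> F2)) \<or>
         (1 \<le> l \<and> l < \<kappa> \<and> l' = l + 1)))"

definition A_init :: "('a \<Rightarrow> 'a) \<Rightarrow> nat \<Rightarrow> 's1 set \<Rightarrow> ('s1 \<Rightarrow> 'a \<Rightarrow> 's1) \<Rightarrow> 's1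
    \<Rightarrow> 's2 set \<Rightarrow> ('s2 \<Rightarrow> 'a \<Rightarrow> 's2) \<Rightarrow> 's2 \<Rightarrow> ('s1, 's2) astate set" where
  "A_init bar \<kappa> Q1 \<delta>1 q01 Q2 \<delta>2 q02 =
     {s \<in> A_states bar \<kappa> Q1 \<delta>1 q01 Q2 \<delta>2 q02. \<exists>q1 q2. s = ((q01, q02), q1, q2, 0)}"

definition A_final :: "('a \<Rightarrow> 'a) \<Rightarrow> nat \<Rightarrow> 's1 set \<Rightarrow> ('s1 \<Rightarrow> 'a \<Rightarrow> 's1) \<Rightarrow> 's1
    \<Rightarrow> 's2 set \<Rightarrow> ('s2 \<Rightarrow> 'a \<Rightarrow> 's2) \<Rightarrow> 's2 \<Rightarrow> ('s1, 's2) astate set" where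
  "A_final bar \<kappa> Q1 \<delta>1 q01 Q2 \<delta>2 q02 =
     {s \<in> A_states bar \<kappa> Q1 \<delta>1 q01 Q2 \<delta>2 q02. snd (snd (snd s)) = \<kappa>}"

definition A_lang :: "('a \<Rightarrow> 'a) \<Rightarrow> nat \<Rightarrow> 's1 set \<Rightarrow> ('s1 \<Rightarrow> 'a \<Rightarrow> 's1) \<Rightarrow> 's1 \<Rightarrow> 's1 set
    \<Rightarrow> 's2 set \<Rightarrow> ('s2 \<Rightarrow> 'a \<Rightarrow> 's2) \<Rightarrow> 's2 \<Rightarrow> 's2 set \<Rightarrow> 'a list set" where
  "A_lang bar \<kappa> Q1 \<delta>1 q01 F1 Q2 \<delta>2 q02 F2 =
     (let S = A_states bar \<kappa> Q1 \<delta>1 q01 Q2 \<delta>2 q02;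
          T = A_trans bar \<kappa> Q1 \<delta>1 q01 F1 Q2 \<delta>2 q02 F2;
          I = A_init bar \<kappa> Q1 \<delta>1 q01 Q2 \<delta>2 q02;
          F = A_final bar \<kappa> Q1 \<delta>1 q01 Q2 \<delta>2 q02
      in nfa_lang (trim_states S T I F) T I F)"

end

theory Submission
  imports Defs
begin

text \<open>Write a word of the hairpin language as \<open>x\<beta>x\<^sup>-\<close> with \<open>x = \<gamma>\<alpha>\<close>, \<open>|\<alpha>| = \<kappa>\<close>, and
  choose the shortest admissible \<open>\<gamma>\<close>. The arms x obtained this way are exactly the words accepted
  by \<open>\<A>\<close>: reading x, \<open>\<A>\<close> runs both automata forwards on x and backwards on \<open>x\<^sup>-\<close> from
  states joined by a guessed bridge \<open>\<beta>\<close>, and its counter measures the distance to the first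
  position where the hairpin condition holds. So the hairpin language is the union, over
  \<open>x \<in> L(\<A>)\<close>, of regular languages, and it is regular when \<open>L(\<A>)\<close> is finite.

  If \<open>L(\<A>)\<close> is infinite and \<open>L\<^sub>2\<close> is finite, long hairpins qualify only through \<open>L\<^sub>1\<close>. For a
  long arm x and a short middle m reaching the same state as \<open>\<beta>\<close>, the word \<open>xmx\<^sup>-\<close> is a
  hairpin whose first hit is at \<open>|x| - \<kappa>\<close>. Cutting x between two prefixes that are
  indistinguishable for the hairpin language and for \<open>\<A>\<^sub>1\<close> yields a shorter hairpin whose
  hit transfers back to \<open>xmx\<^sup>-\<close> at an earlier position, a contradiction. The case of finite
  \<open>L\<^sub>1\<close> follows by the symmetry \<open>W \<mapsto> W\<^sup>-\<close>, which exchanges the two automata.\<close>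

section \<open>Deterministic automata and regularity\<close>

lemma dstep_Nil [simp]: "dstep \<delta> p [] = p"
  by (simp add: dstep_def)

lemma dstep_Cons [simp]: "dstep \<delta> p (a # w) = dstep \<delta> (\<delta> p a) w"
  by (simp add: dstep_def)

lemma dstep_append: "dstep \<delta> p (u @ v) = dstep \<delta> (dstep \<delta> p u) v"
  by (simp add: dstep_def)

lemma dstep_snoc: "dstep \<delta> p (u @ [a]) = \<delta> (dstep \<delta> p u) a"
  by (simp add: dstep_def)

lemma dstep_in_states: "complete_dfa Q \<delta> q0 F \<Longrightarrow> p \<in> Q \<Longrightarrow> dstep \<delta> p w \<in> Q"
  by (induction w arbitrary: p) (auto simp: complete_dfa_def)

lemma pigeonhole_less:
  fixes g :: "nat \<Rightarrow> 'b"
  assumes "finite B" and "g ` {0..n} \<subseteq> B" and "card B \<le> n"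
  obtains i i' where "i < i'" and "i' \<le> n" and "g i = g i'"
proof -
  have "\<not> inj_on g {0..n}"
    using card_inj_on_le[OF _ assms(2,1)] assms(3) by auto
  then obtain i i' where "i \<le> n" "i' \<le> n" "i \<noteq> i'" "g i = g i'"
    unfolding inj_on_def by auto
  then show thesis
    using that by (metis linorder_neqE_nat)
qed

lemma dstep_short_word:
  assumes dfa: "complete_dfa Q \<delta> q0 F" and p: "p \<in> Q"
  shows "\<exists>w'. length w' \<le> card Q \<and> dstep \<delta> p w' = dstep \<delta> p w"
proof (induction "length w" arbitrary: w rule: less_induct)
  case less
  show ?case
  proof (cases "length w \<le> card Q")
    case False
    have "finite Q" using dfa by (simp add: complete_dfa_def)
    moreover have "(\<lambda>i. dstep \<delta> p (take i w)) ` {0..length w} \<subseteq> Q"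
      using dstep_in_states[OF dfa p] by auto
    ultimately obtain i i' where i: "i < i'" "i' \<le> length w"
      and loop: "dstep \<delta> p (take i w) = dstep \<delta> p (take i' w)"
      using False by (elim pigeonhole_less) auto
    have "dstep \<delta> p (take i w @ drop i' w) = dstep \<delta> p w"
      by (metis loop dstep_append append_take_drop_id)
    moreover have "length (take i w @ drop i' w) < length w"
      using i by simp
    ultimately show ?thesis
      using less by metis
  qed blast
qed

text \<open>L is regular iff it has such a classifier; all closure properties are proved by exhibiting
  classifiers.\<close>

definition nerode_classifier :: "'a list set \<Rightarrow> ('a list \<Rightarrow> 'b) \<Rightarrow> bool" where
  "nerode_classifier L f \<longleftrightarrow>
     finite (range f) \<and> (\<forall>u u' w. f u = f u' \<longrightarrow> (u @ w \<in> L \<longleftrightarrow> u' @ w \<in> L))"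

lemma nerode_classifierI:
  assumes "finite (range f)" and "\<And>u u' w. f u = f u' \<Longrightarrow> u @ w \<in> L \<longleftrightarrow> u' @ w \<in> L"
  shows "nerode_classifier L f"
  using assms unfolding nerode_classifier_def by blast

lemma nerode_classifierD:
  "nerode_classifier L f \<Longrightarrow> f u = f u' \<Longrightarrow> u @ w \<in> L \<longleftrightarrow> u' @ w \<in> L"
  unfolding nerode_classifier_def by blast

lemma nerode_classifier_finite_range: "nerode_classifier L f \<Longrightarrow> finite (range f)"
  unfolding nerode_classifier_def by blast

lemma regular_dfa_lang:
  fixes Q :: "'s set"
  assumes dfa: "complete_dfa Q \<delta> q0 F"
  shows "regular (dfa_lang \<delta> q0 F)"
proof -
  have fin: "finite Q" and q0: "q0 \<in> Q" and FQ: "F \<subseteq> Q"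
    using dfa by (auto simp: complete_dfa_def)
  obtain e :: "'s \<Rightarrow> nat" and n where e: "e ` Q = {i. i < n}" "inj_on e Q"
    using finite_imp_inj_to_nat_seg[OF fin] by blast
  define \<delta>' where "\<delta>' m a = e (\<delta> (inv_into Q e m) a)" for m a
  have run: "dstep \<delta>' (e q) w = e (dstep \<delta> q w)" if "q \<in> Q" for q w
    using that
  proof (induction w arbitrary: q)
    case (Cons a w)
    have "\<delta> q a \<in> Q" using dfa Cons.prems by (simp add: complete_dfa_def)
    then show ?case using Cons by (simp add: \<delta>'_def inv_into_f_f[OF e(2)])
  qed simp
  have "complete_dfa (e ` Q) \<delta>' (e q0) (e ` F)"
    using dfa fin q0 FQ unfolding complete_dfa_def
    by (auto simp: \<delta>'_def inv_into_into[of _ e Q] inv_into_f_f[OF e(2)])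
  moreover have "dfa_lang \<delta>' (e q0) (e ` F) = dfa_lang \<delta> q0 F"
    using dstep_in_states[OF dfa q0] FQ e(2)
    by (auto simp: dfa_lang_def run[OF q0] dest: inj_onD)
  ultimately show ?thesis
    unfolding regular_def using e(1) by (metis (no_types, lifting))
qed

lemma regular_if_nerode_classifier:
  assumes cl: "nerode_classifier L f"
  shows "regular L"
proof -
  define residual where "residual u = {w. u @ w \<in> L}" for u
  have "residual u = residual (SOME u'. f u' = f u)" for u
    using nerode_classifierD[OF cl, of "SOME u'. f u' = f u" u] someI[of "\<lambda>u'. f u' = f u" u]
    unfolding residual_def by auto
  then have "range residual \<subseteq> (\<lambda>c. residual (SOME u'. f u' = c)) ` range f"
    by blast
  then have fin: "finite (range residual)"
    using nerode_classifier_finite_range[OF cl] by (meson finite_imageI finite_subset)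
  define \<delta> where "\<delta> S a = {w. a # w \<in> S}" for S :: "'a list set" and a
  have step: "\<delta> (residual u) a = residual (u @ [a])" for u a
    by (simp add: \<delta>_def residual_def)
  have run: "dstep \<delta> (residual u) w = residual (u @ w)" for u w
    by (induction w arbitrary: u) (simp_all add: step)
  have "complete_dfa (range residual) \<delta> (residual []) {S \<in> range residual. [] \<in> S}"
    using fin by (auto simp: complete_dfa_def step)
  moreover have "dfa_lang \<delta> (residual []) {S \<in> range residual. [] \<in> S} = L"
    using run[of "[]"] by (auto simp: dfa_lang_def residual_def)
  ultimately show ?thesis
    by (metis regular_dfa_lang)
qed

lemma nerode_classifier_if_regular:
  assumes "regular L"
  obtains f :: "'a list \<Rightarrow> nat" where "nerode_classifier L f"
proof -
  obtain Q :: "nat set" and \<delta> q0 F where dfa: "complete_dfa Q \<delta> q0 F" and L: "dfa_lang \<delta> q0 F = L"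
    using assms unfolding regular_def by blast
  have "q0 \<in> Q" and "finite Q" using dfa by (auto simp: complete_dfa_def)
  then have "finite (range (dstep \<delta> q0))"
    using dstep_in_states[OF dfa] by (blast intro: finite_subset)
  then have "nerode_classifier L (dstep \<delta> q0)"
    using L by (auto simp: nerode_classifier_def dfa_lang_def dstep_append)
  then show thesis by (rule that)
qed

lemma nerode_classifier_pair:
  assumes "nerode_classifier A f" and "nerode_classifier B g"
    and "\<And>v. v \<in> C \<longleftrightarrow> P (v \<in> A) (v \<in> B)"
  shows "nerode_classifier C (\<lambda>u. (f u, g u))"
proof (rule nerode_classifierI)
  have "range (\<lambda>u. (f u, g u)) \<subseteq> range f \<times> range g" by auto
  then show "finite (range (\<lambda>u. (f u, g u)))"
    using assms(1,2) by (meson finite_SigmaI finite_subset nerode_classifier_finite_range)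
next
  fix u u' w
  assume "(f u, g u) = (f u', g u')"
  then show "u @ w \<in> C \<longleftrightarrow> u' @ w \<in> C"
    using assms nerode_classifierD[of A f u u' w] nerode_classifierD[of B g u u' w] by simp
qed

lemma regular_Int:
  assumes "regular A" and "regular B"
  shows "regular (A \<inter> B)"
proof -
  obtain f :: "'a list \<Rightarrow> nat" where "nerode_classifier A f"
    using assms(1) by (rule nerode_classifier_if_regular)
  moreover obtain g :: "'a list \<Rightarrow> nat" where "nerode_classifier B g"
    using assms(2) by (rule nerode_classifier_if_regular)
  ultimately have "nerode_classifier (A \<inter> B) (\<lambda>u. (f u, g u))"
    by (rule nerode_classifier_pair[where P = "(\<and>)"]) simp
  then show ?thesis by (rule regular_if_nerode_classifier)
qed

lemma regular_Un:
  assumes "regular A" and "regular B"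
  shows "regular (A \<union> B)"
proof -
  obtain f :: "'a list \<Rightarrow> nat" where "nerode_classifier A f"
    using assms(1) by (rule nerode_classifier_if_regular)
  moreover obtain g :: "'a list \<Rightarrow> nat" where "nerode_classifier B g"
    using assms(2) by (rule nerode_classifier_if_regular)
  ultimately have "nerode_classifier (A \<union> B) (\<lambda>u. (f u, g u))"
    by (rule nerode_classifier_pair[where P = "(\<or>)"]) simp
  then show ?thesis by (rule regular_if_nerode_classifier)
qed

lemma regular_empty: "regular {}"
  by (rule regular_if_nerode_classifier[of _ "\<lambda>_. ()"]) (simp add: nerode_classifier_def)

lemma regular_UN: "finite M \<Longrightarrow> (\<And>x. x \<in> M \<Longrightarrow> regular (G x)) \<Longrightarrow> regular (\<Union>x\<in>M. G x)"
  by (induction M rule: finite_induct) (simp_all add: regular_empty regular_Un)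

lemma mem_rev_image: "v \<in> rev ` A \<longleftrightarrow> rev v \<in> A"
  by (metis image_iff rev_rev_ident)

lemma regular_rev_image:
  assumes "regular L"
  shows "regular (rev ` L)"
proof -
  obtain Q :: "nat set" and \<delta> q0 F where dfa: "complete_dfa Q \<delta> q0 F" and L: "dfa_lang \<delta> q0 F = L"
    using assms unfolding regular_def by blast
  have q0: "q0 \<in> Q" using dfa by (simp add: complete_dfa_def)
  \<comment> \<open>a prefix u of a reversed word is classified by the set of states from which rev u leads into F\<close>
  define f where "f u = {q \<in> Q. dstep \<delta> q (rev u) \<in> F}" for u
  have "range f \<subseteq> Pow Q" by (auto simp: f_def)
  then have "finite (range f)"
    using dfa by (auto simp: complete_dfa_def intro: finite_subset)
  moreover have "u @ w \<in> rev ` L \<longleftrightarrow> dstep \<delta> q0 (rev w) \<in> f u" for u w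
    using dstep_in_states[OF dfa q0] L
    by (auto simp: f_def dfa_lang_def dstep_append mem_rev_image)
  ultimately show ?thesis
    by (metis nerode_classifierI regular_if_nerode_classifier)
qed

lemma regular_map_image:
  assumes "regular L" and inv: "\<And>a. g (g a) = a"
  shows "regular (map g ` L)"
proof -
  obtain f :: "'a list \<Rightarrow> nat" where cl: "nerode_classifier L f"
    using assms(1) by (rule nerode_classifier_if_regular)
  have map_map_g: "map g (map g x) = x" for x
    by (induction x) (simp_all add: inv)
  then have mem_map_image: "v \<in> map g ` L \<longleftrightarrow> map g v \<in> L" for v
    by (metis image_iff)
  have "range (\<lambda>u. f (map g u)) \<subseteq> range f" by auto
  then have "finite (range (\<lambda>u. f (map g u)))"
    using nerode_classifier_finite_range[OF cl] by (rule finite_subset)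
  moreover have "u @ w \<in> map g ` L \<longleftrightarrow> u' @ w \<in> map g ` L"
    if "f (map g u) = f (map g u')" for u u' w
    using nerode_classifierD[OF cl that, of "map g w"] by (simp add: mem_map_image)
  ultimately have "nerode_classifier (map g ` L) (\<lambda>u. f (map g u))"
    by (rule nerode_classifierI)
  then show ?thesis by (rule regular_if_nerode_classifier)
qed

lemma finite_lists_length_le_UNIV: "finite {xs :: ('a::finite) list. length xs \<le> n}"
  using finite_lists_length_le[of "UNIV :: 'a set" n] by simp

lemma infinite_imp_long_word:
  assumes "infinite (S :: ('a::finite) list set)"
  shows "\<exists>x\<in>S. n \<le> length x"
proof (rule ccontr)
  assume "\<not> (\<exists>x\<in>S. n \<le> length x)"
  then have "S \<subseteq> {xs. length xs \<le> n}" by auto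
  then show False
    using assms finite_lists_length_le_UNIV finite_subset by blast
qed

lemma regular_drop_preimage:
  fixes K :: "('a::finite) list set"
  assumes "regular K"
  shows "regular {W. drop n W \<in> K}"
proof -
  obtain g :: "'a list \<Rightarrow> nat" where cl: "nerode_classifier K g"
    using assms by (rule nerode_classifier_if_regular)
  define f where "f u = (take n u, min (length u) n, g (drop n u))" for u
  have "range f \<subseteq> {xs. length xs \<le> n} \<times> {..n} \<times> range g"
    by (auto simp: f_def)
  then have "finite (range f)"
    by (rule finite_subset)
      (intro finite_cartesian_product finite_lists_length_le_UNIV finite_atMost
        nerode_classifier_finite_range[OF cl])
  moreover have "u @ w \<in> {W. drop n W \<in> K} \<longleftrightarrow> u' @ w \<in> {W. drop n W \<in> K}"
    if "f u = f u'" for u u' w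
  proof (cases "length u < n")
    case True
    then have "u = u'" using that by (auto simp: f_def min_def split: if_splits)
    then show ?thesis by simp
  next
    case False
    then have "n \<le> length u'" using that by (auto simp: f_def min_def split: if_splits)
    then show ?thesis
      using False that nerode_classifierD[OF cl, of "drop n u" "drop n u'" w] by (simp add: f_def)
  qed
  ultimately have "nerode_classifier {W. drop n W \<in> K} f"
    by (rule nerode_classifierI)
  then show ?thesis by (rule regular_if_nerode_classifier)
qed

lemma regular_prefix:
  fixes x :: "('a::finite) list"
  shows "regular {W. take (length x) W = x}"
proof -
  define f where "f u = (take (length x) u, min (length u) (length x))" for u :: "'a list"
  have "range f \<subseteq> {xs. length xs \<le> length x} \<times> {..length x}"
    by (auto simp: f_def)
  then have "finite (range f)"
    by (rule finite_subset) (intro finite_cartesian_product finite_lists_length_le_UNIV finite_atMost)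
  moreover have "u @ w \<in> {W. take (length x) W = x} \<longleftrightarrow> u' @ w \<in> {W. take (length x) W = x}"
    if "f u = f u'" for u u' w
  proof (cases "length u < length x")
    case True
    then have "u = u'" using that by (auto simp: f_def min_def split: if_splits)
    then show ?thesis by simp
  next
    case False
    then have "length x \<le> length u'" using that by (auto simp: f_def min_def split: if_splits)
    then show ?thesis using False that by (simp add: f_def)
  qed
  ultimately have "nerode_classifier {W. take (length x) W = x} f"
    by (rule nerode_classifierI)
  then show ?thesis by (rule regular_if_nerode_classifier)
qed

lemma regular_length_ge: "regular {W. n \<le> length W}"
proof -
  have "finite (range (\<lambda>u::'a list. min (length u) n))"
    by (rule finite_subset[of _ "{..n}"]) auto
  then show ?thesis
    by (intro regular_if_nerode_classifier[of _ "\<lambda>u. min (length u) n"] nerode_classifierI)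
      (auto simp: min_def split: if_splits)
qed

lemma regular_take_preimage:
  fixes K :: "('a::finite) list set"
  assumes "regular K"
  shows "regular {W. take (length W - j) W \<in> K}"
proof -
  have "{W. take (length W - j) W \<in> K} = rev ` {V. drop j V \<in> rev ` K}"
    by (simp add: set_eq_iff mem_rev_image drop_rev)
  then show ?thesis
    using assms by (simp add: regular_rev_image regular_drop_preimage)
qed

lemma nfa_path_append:
  "nfa_path R p (u @ v) q \<longleftrightarrow> (\<exists>r. nfa_path R p u r \<and> nfa_path R r v q)"
  by (induction u arbitrary: p) auto

lemma nfa_path_snoc: "nfa_path R p (w @ [a]) q \<longleftrightarrow> (\<exists>r. nfa_path R p w r \<and> R r a q)"
  by (simp add: nfa_path_append)

lemma nfa_path_restr_mono:
  "S \<subseteq> S' \<Longrightarrow> nfa_path (restr S T) p w q \<Longrightarrow> nfa_path (restr S' T) p w q"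
  by (induction w arbitrary: p) (auto simp: restr_def)

lemma restr_id: "(\<And>p a r. T p a r \<Longrightarrow> p \<in> S \<and> r \<in> S) \<Longrightarrow> restr S T = T"
  unfolding restr_def by (intro ext) blast

lemma nfa_path_of_steps:
  "(\<And>i. i < length w \<Longrightarrow> R (\<sigma> i) (w ! i) (\<sigma> (Suc i))) \<Longrightarrow> nfa_path R (\<sigma> 0) w (\<sigma> (length w))"
proof (induction w arbitrary: \<sigma>)
  case (Cons a w)
  have "nfa_path R ((\<sigma> \<circ> Suc) 0) w ((\<sigma> \<circ> Suc) (length w))"
    using Cons.prems by (intro Cons.IH) force
  moreover have "R (\<sigma> 0) a (\<sigma> 1)"
    using Cons.prems[of 0] by simp
  ultimately show ?case by auto
qed simp

lemma trim_states_subset: "trim_states S T I F \<subseteq> S"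
  unfolding trim_states_def by blast

lemma nfa_path_within_trim_states:
  assumes "p \<in> trim_states S T I F" and "nfa_path (restr S T) p w q" and "q \<in> F \<inter> S"
  shows "nfa_path (restr (trim_states S T I F) T) p w q"
  using assms
proof (induction w arbitrary: p)
  case (Cons a w)
  obtain r where step: "restr S T p a r" and path: "nfa_path (restr S T) r w q"
    using Cons.prems(2) by auto
  obtain p0 u where "p0 \<in> I \<inter> S" and "nfa_path (restr S T) p0 u p"
    using Cons.prems(1) unfolding trim_states_def by blast
  then have "nfa_path (restr S T) p0 (u @ [a]) r"
    using step by (auto simp: nfa_path_snoc)
  then have "r \<in> trim_states S T I F"
    using \<open>p0 \<in> I \<inter> S\<close> step path Cons.prems(3) unfolding trim_states_def restr_def by blast
  then have "restr (trim_states S T I F) T p a r"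
    using Cons.prems(1) step by (simp add: restr_def)
  moreover have "nfa_path (restr (trim_states S T I F) T) r w q"
    using Cons.IH[OF \<open>r \<in> trim_states S T I F\<close> path Cons.prems(3)] .
  ultimately show ?case by auto
qed simp

lemma nfa_lang_trim_states: "nfa_lang (trim_states S T I F) T I F = nfa_lang S T I F"
proof (intro set_eqI iffI)
  fix w
  assume "w \<in> nfa_lang (trim_states S T I F) T I F"
  then obtain p q where "p \<in> I \<inter> trim_states S T I F" "q \<in> F \<inter> trim_states S T I F"
    and "nfa_path (restr (trim_states S T I F) T) p w q"
    unfolding nfa_lang_def by blast
  then show "w \<in> nfa_lang S T I F"
    using trim_states_subset[of S T I F] nfa_path_restr_mono[OF trim_states_subset[of S T I F]]
    unfolding nfa_lang_def by blast
next
  fix w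
  assume "w \<in> nfa_lang S T I F"
  then obtain p q where p: "p \<in> I \<inter> S" and q: "q \<in> F \<inter> S" and path: "nfa_path (restr S T) p w q"
    unfolding nfa_lang_def by blast
  have "nfa_path (restr S T) p [] p" and "nfa_path (restr S T) q [] q"
    by simp_all
  then have "p \<in> trim_states S T I F" and "q \<in> trim_states S T I F"
    using p q path unfolding trim_states_def by blast+
  then show "w \<in> nfa_lang (trim_states S T I F) T I F"
    using p q nfa_path_within_trim_states[OF _ path q] unfolding nfa_lang_def by blast
qed

section \<open>Hairpins and hits\<close>

lemma bar_word_Nil [simp]: "bar_word bar [] = []"
  by (simp add: bar_word_def)

lemma bar_word_Cons: "bar_word bar (a # w) = bar_word bar w @ [bar a]"
  by (simp add: bar_word_def)

lemma bar_word_append [simp]: "bar_word bar (u @ v) = bar_word bar v @ bar_word bar u"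
  by (simp add: bar_word_def)

lemma length_bar_word [simp]: "length (bar_word bar w) = length w"
  by (simp add: bar_word_def)

lemma bar_word_bar_word: "(\<And>a. bar (bar a) = a) \<Longrightarrow> bar_word bar (bar_word bar w) = w"
  by (induction w) (simp_all add: bar_word_def)

locale hairpin_dfas =
  fixes bar :: "'a::finite \<Rightarrow> 'a" and \<kappa> :: nat
    and Q1 :: "'s1 set" and \<delta>1 :: "'s1 \<Rightarrow> 'a \<Rightarrow> 's1" and q01 :: 's1 and F1 :: "'s1 set"
    and Q2 :: "'s2 set" and \<delta>2 :: "'s2 \<Rightarrow> 'a \<Rightarrow> 's2" and q02 :: 's2 and F2 :: "'s2 set"
  assumes bar_bar: "\<And>a. bar (bar a) = a" and kappa_pos: "0 < \<kappa>"
    and dfa1: "complete_dfa Q1 \<delta>1 q01 F1" and dfa2: "complete_dfa Q2 \<delta>2 q02 F2"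
begin

abbreviation bw :: "'a list \<Rightarrow> 'a list" where
  "bw \<equiv> bar_word bar"

abbreviation run1 :: "'a list \<Rightarrow> 's1" where
  "run1 \<equiv> dstep \<delta>1 q01"

abbreviation run2 :: "'a list \<Rightarrow> 's2" where
  "run2 \<equiv> dstep \<delta>2 q02"

abbreviation lang1 :: "'a list set" where
  "lang1 \<equiv> dfa_lang \<delta>1 q01 F1"

abbreviation lang2 :: "'a list set" where
  "lang2 \<equiv> bar_lang bar (dfa_lang \<delta>2 q02 F2)"

lemma bw_bw [simp]: "bw (bw w) = w"
  by (simp add: bar_word_bar_word bar_bar)

lemma mem_image_bw: "w \<in> bw ` L \<longleftrightarrow> bw w \<in> L"
  by (metis bw_bw image_iff)

lemma mem_bar_lang: "w \<in> bar_lang bar L \<longleftrightarrow> bw w \<in> L"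
  by (simp add: bar_lang_def mem_image_bw)

lemma regular_image_bw:
  assumes "regular L"
  shows "regular (bw ` L)"
proof -
  have "bw ` L = rev ` map bar ` L"
    by (auto simp: bar_word_def image_image)
  then show ?thesis
    using assms by (simp add: regular_rev_image regular_map_image bar_bar)
qed

lemma q0_in_states: "q01 \<in> Q1" "q02 \<in> Q2"
  using dfa1 dfa2 by (simp_all add: complete_dfa_def)

text \<open>For \<open>W = \<gamma>\<alpha>\<beta>\<alpha>\<^sup>-\<gamma>\<^sup>-\<close> with \<open>|\<gamma>| = j\<close>, \<open>hit W j\<close> is the condition
  \<open>\<gamma>\<alpha>\<beta>\<alpha>\<^sup>- \<in> L\<^sub>1 \<or> \<alpha>\<beta>\<alpha>\<^sup>-\<gamma>\<^sup>- \<in> L\<^sub>2\<close> of the hairpin language.\<close>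

definition hit :: "'a list \<Rightarrow> nat \<Rightarrow> bool" where
  "hit W j \<longleftrightarrow> run1 (take (length W - j) W) \<in> F1 \<or> run2 (take (length W - j) (bw W)) \<in> F2"

definition hairpin_shape :: "'a list \<Rightarrow> nat \<Rightarrow> bool" where
  "hairpin_shape W j \<longleftrightarrow> (\<exists>y \<beta>. length y = j + \<kappa> \<and> W = y @ \<beta> @ bw y)"

lemma take_hairpin:
  assumes "j \<le> length y"
  shows "take (length (y @ \<beta> @ bw y) - j) (y @ \<beta> @ bw y) = y @ \<beta> @ bw (drop j y)"
proof -
  have "bw y = bw (drop j y) @ bw (take j y)"
    by (metis append_take_drop_id bar_word_append)
  moreover have "length (bw (take j y)) = j"
    using assms by simp
  ultimately show ?thesis by simp
qed

lemma hit_hairpin_iff: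
  assumes "j \<le> length y"
  shows "hit (y @ \<beta> @ bw y) j \<longleftrightarrow>
    run1 (y @ \<beta> @ bw (drop j y)) \<in> F1 \<or> run2 (y @ bw \<beta> @ bw (drop j y)) \<in> F2"
proof -
  have "take (length (y @ \<beta> @ bw y) - j) (bw (y @ \<beta> @ bw y)) = y @ bw \<beta> @ bw (drop j y)"
    using take_hairpin[OF assms, of "bw \<beta>"] by simp
  then show ?thesis
    unfolding hit_def using take_hairpin[OF assms, of \<beta>] by simp
qed

lemma hairpin_split:
  assumes "k \<le> length y"
  shows "y @ \<beta> @ bw y = take k y @ (drop k y @ \<beta> @ bw (drop k y)) @ bw (take k y)"
  by (metis append.assoc append_take_drop_id bar_word_append)

lemma hairpin_shape_mono:
  assumes "hairpin_shape W j" and "j' \<le> j"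
  shows "hairpin_shape W j'"
proof -
  obtain y \<beta> where y: "length y = j + \<kappa>" and W: "W = y @ \<beta> @ bw y"
    using assms(1) unfolding hairpin_shape_def by blast
  have "j' + \<kappa> \<le> length y"
    using y assms(2) by simp
  then show ?thesis
    unfolding hairpin_shape_def W using hairpin_split[of "j' + \<kappa>" y \<beta>]
    by (metis length_take min.absorb2)
qed

lemma hairpin_shape_length: "hairpin_shape W j \<Longrightarrow> 2 * (j + \<kappa>) \<le> length W"
  unfolding hairpin_shape_def by auto

lemma hairpin_eq_hits: "hairpin bar \<kappa> lang1 lang2 = {W. \<exists>j. hairpin_shape W j \<and> hit W j}"
proof (intro set_eqI iffI)
  fix W
  assume "W \<in> hairpin bar \<kappa> lang1 lang2"
  then obtain \<gamma> \<alpha> \<beta> where W: "W = (\<gamma> @ \<alpha>) @ \<beta> @ bw (\<gamma> @ \<alpha>)" and \<alpha>: "\<kappa> \<le> length \<alpha>"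
    and mem: "\<gamma> @ \<alpha> @ \<beta> @ bw \<alpha> \<in> lang1 \<or> \<alpha> @ \<beta> @ bw \<alpha> @ bw \<gamma> \<in> lang2"
    unfolding hairpin_def by auto
  have "hairpin_shape W (length \<gamma> + (length \<alpha> - \<kappa>))"
    unfolding hairpin_shape_def W using \<alpha> by (intro exI[of _ "\<gamma> @ \<alpha>"] exI[of _ \<beta>]) simp
  then have "hairpin_shape W (length \<gamma>)"
    by (rule hairpin_shape_mono) simp
  moreover have "length \<gamma> \<le> length (\<gamma> @ \<alpha>)"
    by simp
  then have "hit W (length \<gamma>)"
    unfolding W hit_hairpin_iff[OF \<open>length \<gamma> \<le> _\<close>]
    using mem by (auto simp: dfa_lang_def mem_bar_lang)
  ultimately show "W \<in> {W. \<exists>j. hairpin_shape W j \<and> hit W j}"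
    by blast
next
  fix W
  assume "W \<in> {W. \<exists>j. hairpin_shape W j \<and> hit W j}"
  then obtain j y \<beta> where y: "length y = j + \<kappa>" and W: "W = y @ \<beta> @ bw y" and "hit W j"
    unfolding hairpin_shape_def by blast
  define \<gamma> \<alpha> where "\<gamma> = take j y" and "\<alpha> = drop j y"
  have "j \<le> length y"
    using y by simp
  then have "run1 ((\<gamma> @ \<alpha>) @ \<beta> @ bw \<alpha>) \<in> F1 \<or> run2 ((\<gamma> @ \<alpha>) @ bw \<beta> @ bw \<alpha>) \<in> F2"
    using \<open>hit W j\<close> unfolding W hit_hairpin_iff[OF \<open>j \<le> length y\<close>]
    by (simp add: \<gamma>_def \<alpha>_def)
  then have "\<gamma> @ \<alpha> @ \<beta> @ bw \<alpha> \<in> lang1 \<or> \<alpha> @ \<beta> @ bw \<alpha> @ bw \<gamma> \<in> lang2"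
    by (auto simp: dfa_lang_def mem_bar_lang)
  moreover have "W = \<gamma> @ \<alpha> @ \<beta> @ bw \<alpha> @ bw \<gamma>" and "\<kappa> \<le> length \<alpha>"
    using W y by (simp_all add: \<gamma>_def \<alpha>_def flip: bar_word_append)
  ultimately show "W \<in> hairpin bar \<kappa> lang1 lang2"
    unfolding hairpin_def by blast
qed

text \<open>Writing \<open>x = \<gamma>\<alpha>\<close> with \<open>|\<alpha>| = \<kappa>\<close>, the word \<open>x\<beta>x\<^sup>-\<close> is a hairpin with outer part \<gamma>, and
  no shorter outer part works. These x form the language of the automaton \<A>.\<close>

definition minimal_split :: "'a list \<Rightarrow> 'a list \<Rightarrow> bool" where
  "minimal_split x \<beta> \<longleftrightarrow> \<kappa> \<le> length x \<and> hit (x @ \<beta> @ bw x) (length x - \<kappa>) \<and>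
     (\<forall>j < length x - \<kappa>. \<not> hit (x @ \<beta> @ bw x) j)"

definition hairpins_with_arm :: "'a list \<Rightarrow> 'a list set" where
  "hairpins_with_arm x = {W. \<exists>\<beta>. W = x @ \<beta> @ bw x}"

lemma hairpins_with_arm_eq:
  "hairpins_with_arm x = {W. take (length x) W = x} \<inter> {W. 2 * length x \<le> length W}
    \<inter> rev ` {V. take (length (rev (bw x))) V = rev (bw x)}"
proof (intro set_eqI iffI)
  fix W
  assume "W \<in> hairpins_with_arm x"
  then obtain \<beta> where W: "W = x @ \<beta> @ bw x"
    unfolding hairpins_with_arm_def by blast
  then show "W \<in> {W. take (length x) W = x} \<inter> {W. 2 * length x \<le> length W}
    \<inter> rev ` {V. take (length (rev (bw x))) V = rev (bw x)}"
    by (simp add: mem_rev_image)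
next
  fix W
  assume "W \<in> {W. take (length x) W = x} \<inter> {W. 2 * length x \<le> length W}
    \<inter> rev ` {V. take (length (rev (bw x))) V = rev (bw x)}"
  then have pre: "take (length x) W = x" and len: "2 * length x \<le> length W"
    and suf: "drop (length W - length x) W = bw x"
    by (auto simp: mem_rev_image take_rev)
  define R where "R = drop (length x) W"
  have W: "W = x @ R"
    using pre unfolding R_def by (metis append_take_drop_id)
  define \<beta> where "\<beta> = take (length W - 2 * length x) R"
  have "take (length W - length x) W = x @ \<beta>"
    using len unfolding \<beta>_def W by (simp add: take_append)
  then have "W = x @ \<beta> @ bw x"
    using suf by (metis append.assoc append_take_drop_id)
  then show "W \<in> hairpins_with_arm x"
    unfolding hairpins_with_arm_def by blast
qed

lemma regular_hairpins_with_arm: "regular (hairpins_with_arm x)"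
  unfolding hairpins_with_arm_eq
  by (intro regular_Int regular_prefix regular_length_ge regular_rev_image)

lemma regular_hit: "regular {W. hit W j}"
proof -
  have "{W. hit W j} =
    {W. take (length W - j) W \<in> lang1} \<union> bw ` {W. take (length W - j) W \<in> dfa_lang \<delta>2 q02 F2}"
    by (auto simp: hit_def mem_image_bw dfa_lang_def)
  then show ?thesis
    using regular_dfa_lang[OF dfa1] regular_dfa_lang[OF dfa2]
    by (simp add: regular_Un regular_take_preimage regular_image_bw)
qed

lemma hits_eq_UN_minimal_split:
  "{W. \<exists>j. hairpin_shape W j \<and> hit W j} =
    (\<Union>x\<in>{x. \<exists>\<beta>. minimal_split x \<beta>}. hairpins_with_arm x \<inter> {W. hit W (length x - \<kappa>)})"
proof (intro set_eqI iffI)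
  fix W
  assume "W \<in> {W. \<exists>j. hairpin_shape W j \<and> hit W j}"
  then have ex: "\<exists>j. hairpin_shape W j \<and> hit W j" by blast
  define j0 where "j0 = (LEAST j. hairpin_shape W j \<and> hit W j)"
  have j0: "hairpin_shape W j0" "hit W j0"
    using LeastI_ex[OF ex] unfolding j0_def by blast+
  have below: "\<not> hit W j" if "j < j0" for j
    using not_less_Least[of j "\<lambda>j. hairpin_shape W j \<and> hit W j"] that
      hairpin_shape_mono[OF j0(1), of j] unfolding j0_def by auto
  obtain y \<beta> where y: "length y = j0 + \<kappa>" "W = y @ \<beta> @ bw y"
    using j0(1) unfolding hairpin_shape_def by blast
  have "minimal_split y \<beta>"
    unfolding minimal_split_def using y j0 below by auto
  moreover have "W \<in> hairpins_with_arm y \<inter> {W. hit W (length y - \<kappa>)}"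
    unfolding hairpins_with_arm_def using y j0 by auto
  ultimately show "W \<in> (\<Union>x\<in>{x. \<exists>\<beta>. minimal_split x \<beta>}.
      hairpins_with_arm x \<inter> {W. hit W (length x - \<kappa>)})"
    by blast
next
  fix W
  assume "W \<in> (\<Union>x\<in>{x. \<exists>\<beta>. minimal_split x \<beta>}.
    hairpins_with_arm x \<inter> {W. hit W (length x - \<kappa>)})"
  then obtain x \<beta>0 \<beta> where "minimal_split x \<beta>0" and W: "W = x @ \<beta> @ bw x"
    and "hit W (length x - \<kappa>)"
    unfolding hairpins_with_arm_def by blast
  moreover have "hairpin_shape W (length x - \<kappa>)"
    using \<open>minimal_split x \<beta>0\<close> W unfolding minimal_split_def hairpin_shape_def by auto
  ultimately show "W \<in> {W. \<exists>j. hairpin_shape W j \<and> hit W j}"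
    by blast
qed

lemma regular_hairpin_if_finite_arms:
  "finite {x. \<exists>\<beta>. minimal_split x \<beta>} \<Longrightarrow> regular (hairpin bar \<kappa> lang1 lang2)"
  unfolding hairpin_eq_hits hits_eq_UN_minimal_split
  by (intro regular_UN regular_Int regular_hairpins_with_arm regular_hit)

end

section \<open>The automaton \<open>\<A>\<close>\<close>

text \<open>The counter \<open>\<ell>\<close> of the automaton after reading n letters, where \<open>h i\<close> tells whether
  position i is a hit: 0 before the first hit, then the distance to the first hit.\<close>

definition first_hit_level :: "(nat \<Rightarrow> bool) \<Rightarrow> nat \<Rightarrow> nat" where
  "first_hit_level h n = (if \<exists>k<n. h k then n - (LEAST k. h k) else 0)"

lemma first_hit_level_eq:
  assumes "h k" and "\<forall>i<k. \<not> h i"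
  shows "first_hit_level h n = n - k"
proof (cases "k < n")
  case True
  have "(LEAST k. h k) = k"
    by (rule Least_equality) (use assms leI in blast)+
  then show ?thesis
    using True assms(1) by (auto simp: first_hit_level_def)
next
  case False
  then show ?thesis
    using assms(2) by (auto simp: first_hit_level_def)
qed

lemma first_hit_level_pos:
  assumes "0 < first_hit_level h n"
  shows "h (n - first_hit_level h n)" and "\<forall>i < n - first_hit_level h n. \<not> h i"
proof -
  obtain k where "k < n" "h k"
    using assms by (auto simp: first_hit_level_def split: if_splits)
  moreover have "(LEAST k. h k) \<le> k"
    using \<open>h k\<close> by (rule Least_le)
  ultimately have "n - first_hit_level h n = (LEAST k. h k)"
    by (auto simp: first_hit_level_def)
  then show "h (n - first_hit_level h n)" and "\<forall>i < n - first_hit_level h n. \<not> h i"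
    using \<open>h k\<close> by (auto intro: LeastI dest: not_less_Least)
qed

lemma first_hit_level_cong:
  assumes "\<And>k. k < n \<Longrightarrow> h k = h' k"
  shows "first_hit_level h n = first_hit_level h' n"
proof (cases "\<exists>k<n. h k")
  case True
  define k where "k = (LEAST k. h k)"
  have "h k" and "k < n"
    using True LeastI_ex[of h] Least_le[of h] unfolding k_def by (auto dest: le_less_trans)
  moreover have "\<forall>i<k. \<not> h i"
    unfolding k_def using not_less_Least by blast
  ultimately show ?thesis
    using assms by (simp add: first_hit_level_eq[of h k] first_hit_level_eq[of h' k])
next
  case False
  moreover have "\<not> (\<exists>k<n. h' k)"
    using False assms by auto
  ultimately show ?thesis
    unfolding first_hit_level_def by (simp only: if_False)
qed

lemma first_hit_level_Suc:
  "first_hit_level h (Suc n) =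
     (if first_hit_level h n = 0 then (if h n then 1 else 0) else Suc (first_hit_level h n))"
proof (cases "\<exists>k<n. h k")
  case True
  then have "(LEAST k. h k) < n"
    by (meson LeastI_ex Least_le le_less_trans)
  with True show ?thesis
    by (auto simp: first_hit_level_def less_Suc_eq)
next
  case False
  then have "h n \<Longrightarrow> (LEAST k. h k) = n"
    by (metis LeastI Least_le le_neq_implies_less)
  with False show ?thesis
    by (auto simp: first_hit_level_def less_Suc_eq)
qed

context hairpin_dfas
begin

abbreviation Astates :: "('s1, 's2) astate set" where
  "Astates \<equiv> A_states bar \<kappa> Q1 \<delta>1 q01 Q2 \<delta>2 q02"

abbreviation Atrans :: "('s1, 's2) astate \<Rightarrow> 'a \<Rightarrow> ('s1, 's2) astate \<Rightarrow> bool" where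
  "Atrans \<equiv> A_trans bar \<kappa> Q1 \<delta>1 q01 F1 Q2 \<delta>2 q02 F2"

abbreviation Ainit :: "('s1, 's2) astate set" where
  "Ainit \<equiv> A_init bar \<kappa> Q1 \<delta>1 q01 Q2 \<delta>2 q02"

abbreviation Afinal :: "('s1, 's2) astate set" where
  "Afinal \<equiv> A_final bar \<kappa> Q1 \<delta>1 q01 Q2 \<delta>2 q02"

lemma mem_Astates:
  "((p1, p2), q1, q2, l) \<in> Astates \<longleftrightarrow>
    (p1, p2) \<in> Q12 \<delta>1 q01 \<delta>2 q02 \<and> q1 \<in> Q1 \<and> q2 \<in> Q2 \<and> l \<le> \<kappa> \<and>
    basic_bridge bar \<delta>1 \<delta>2 p1 p2 q1 q2"
  unfolding A_states_def by blast

lemma A_trans_level_iff: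
  "(l = 0 \<and> l' = 0 \<and> q \<notin> F1 \<and> q' \<notin> F2) \<or> (l = 0 \<and> l' = 1 \<and> (q \<in> F1 \<or> q' \<in> F2)) \<or>
     (1 \<le> l \<and> l < \<kappa> \<and> l' = l + 1) \<longleftrightarrow>
   l' = (if l = 0 then (if q \<in> F1 \<or> q' \<in> F2 then 1 else 0) else Suc l) \<and> (l \<noteq> 0 \<longrightarrow> l < \<kappa>)"
  by auto

lemma A_lang_eq_paths:
  "A_lang bar \<kappa> Q1 \<delta>1 q01 F1 Q2 \<delta>2 q02 F2 = {x. \<exists>p\<in>Ainit. \<exists>q\<in>Afinal. nfa_path Atrans p x q}"
proof -
  have "restr Astates Atrans = Atrans"
    by (rule restr_id) (simp add: A_trans_def)
  moreover have "Ainit \<subseteq> Astates" and "Afinal \<subseteq> Astates"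
    unfolding A_init_def A_final_def by blast+
  then have "Ainit \<inter> Astates = Ainit" and "Afinal \<inter> Astates = Afinal"
    by blast+
  ultimately show ?thesis
    unfolding A_lang_def Let_def nfa_lang_trim_states unfolding nfa_lang_def by simp
qed

text \<open>Whether position i of w is a hit, judged from the states \<open>f1, f2\<close> that the two automata
  reach after the middle part of the hairpin.\<close>

definition hit_after :: "'s1 \<Rightarrow> 's2 \<Rightarrow> 'a list \<Rightarrow> nat \<Rightarrow> bool" where
  "hit_after f1 f2 w i \<longleftrightarrow> dstep \<delta>1 f1 (bw (drop i w)) \<in> F1 \<or> dstep \<delta>2 f2 (bw (drop i w)) \<in> F2"

lemma hit_after_snoc:
  "i \<le> length w \<Longrightarrow>
    hit_after f1 f2 (w @ [a]) i = hit_after (\<delta>1 f1 (bar a)) (\<delta>2 f2 (bar a)) w i"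
  by (simp add: hit_after_def bar_word_def)

lemma hit_after_iff_hit:
  "i \<le> length x \<Longrightarrow>
    hit_after (run1 (x @ \<beta>)) (run2 (x @ bw \<beta>)) x i \<longleftrightarrow> hit (x @ \<beta> @ bw x) i"
  by (simp add: hit_after_def hit_hairpin_iff dstep_append)

lemma path_from_init:
  assumes "nfa_path Atrans ((q01, q02), r1, r2, 0) w ((e1, e2), f1, f2, l)"
  shows "e1 = run1 w \<and> e2 = run2 w \<and> r1 = dstep \<delta>1 f1 (bw w) \<and> r2 = dstep \<delta>2 f2 (bw w) \<and>
    l = first_hit_level (hit_after f1 f2 w) (length w)"
  using assms
proof (induction w arbitrary: e1 e2 f1 f2 l rule: rev_induct)
  case Nil
  then show ?case by (simp add: first_hit_level_def)
next
  case (snoc a w)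
  let ?h = "\<delta>1 f1 (bar a) \<in> F1 \<or> \<delta>2 f2 (bar a) \<in> F2"
  obtain u where path: "nfa_path Atrans ((q01, q02), r1, r2, 0) w u"
    and step: "Atrans u a ((e1, e2), f1, f2, l)"
    using snoc.prems by (auto simp: nfa_path_snoc)
  then obtain p1 p2 l0 where u: "u = ((p1, p2), \<delta>1 f1 (bar a), \<delta>2 f2 (bar a), l0)"
    and e: "e1 = \<delta>1 p1 a" "e2 = \<delta>2 p2 a"
    and l: "l = (if l0 = 0 then (if ?h then 1 else 0) else Suc l0)"
    unfolding A_trans_def A_trans_level_iff by auto
  note IH = snoc.IH[OF path[unfolded u]]
  have "l0 = first_hit_level (hit_after f1 f2 (w @ [a])) (length w)"
    using IH hit_after_snoc by (auto intro: first_hit_level_cong)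
  moreover have "hit_after f1 f2 (w @ [a]) (length w) \<longleftrightarrow> ?h"
    by (simp add: hit_after_def bar_word_def)
  ultimately have "l = first_hit_level (hit_after f1 f2 (w @ [a])) (length (w @ [a]))"
    using l by (simp add: first_hit_level_Suc)
  then show ?case
    using IH e by (simp add: dstep_snoc bar_word_def)
qed

lemma minimal_split_if_accepted:
  assumes "x \<in> A_lang bar \<kappa> Q1 \<delta>1 q01 F1 Q2 \<delta>2 q02 F2"
  shows "\<exists>\<beta>. minimal_split x \<beta>"
proof -
  obtain r1 r2 e1 e2 f1 f2 where "((e1, e2), f1, f2, \<kappa>) \<in> Astates"
    and path: "nfa_path Atrans ((q01, q02), r1, r2, 0) x ((e1, e2), f1, f2, \<kappa>)"
    using assms unfolding A_lang_eq_paths A_init_def A_final_def by fastforce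
  then obtain \<beta> where \<beta>: "dstep \<delta>1 e1 \<beta> = f1" "dstep \<delta>2 e2 (bw \<beta>) = f2"
    unfolding mem_Astates basic_bridge_def by blast
  have run: "e1 = run1 x" "e2 = run2 x" and
    level: "\<kappa> = first_hit_level (hit_after f1 f2 x) (length x)"
    using path_from_init[OF path] by simp_all
  have hits: "hit_after f1 f2 x i \<longleftrightarrow> hit (x @ \<beta> @ bw x) i" if "i \<le> length x" for i
    using hit_after_iff_hit[OF that, of \<beta>] \<beta> run by (simp add: dstep_append)
  have "\<kappa> \<le> length x"
    using level by (auto simp: first_hit_level_def split: if_splits)
  then have "minimal_split x \<beta>"
    using first_hit_level_pos[of "hit_after f1 f2 x" "length x", folded level] kappa_pos hits
    unfolding minimal_split_def by simp
  then show ?thesis by blast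
qed

lemma accepted_if_minimal_split:
  assumes split: "minimal_split x \<beta>"
  shows "x \<in> A_lang bar \<kappa> Q1 \<delta>1 q01 F1 Q2 \<delta>2 q02 F2"
proof -
  define f1 f2 where "f1 = run1 (x @ \<beta>)" and "f2 = run2 (x @ bw \<beta>)"
  define h where "h = hit_after f1 f2 x"
  define k where "k = length x - \<kappa>"
  define \<sigma> where "\<sigma> i = ((run1 (take i x), run2 (take i x)),
      dstep \<delta>1 f1 (bw (drop i x)), dstep \<delta>2 f2 (bw (drop i x)), first_hit_level h i)" for i
  have x: "length x = k + \<kappa>"
    using split unfolding minimal_split_def k_def by simp
  have "h k" and "\<forall>i<k. \<not> h i"
    using split hit_after_iff_hit unfolding minimal_split_def h_def f1_def f2_def k_def by auto
  then have level: "first_hit_level h i = i - k" for i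
    by (rule first_hit_level_eq)
  have f: "f1 \<in> Q1" "f2 \<in> Q2"
    unfolding f1_def f2_def
    using dstep_in_states[OF dfa1 q0_in_states(1)] dstep_in_states[OF dfa2 q0_in_states(2)] by simp_all
  have states: "\<sigma> i \<in> Astates" if "i \<le> length x" for i
  proof -
    have "basic_bridge bar \<delta>1 \<delta>2 (run1 (take i x)) (run2 (take i x))
        (dstep \<delta>1 f1 (bw (drop i x))) (dstep \<delta>2 f2 (bw (drop i x)))"
      unfolding basic_bridge_def f1_def f2_def
      by (rule exI[of _ "drop i x @ \<beta> @ bw (drop i x)"])
        (simp add: dstep_append flip: dstep_append[of _ _ "take i x"] append_assoc)
    moreover have "(run1 (take i x), run2 (take i x)) \<in> Q12 \<delta>1 q01 \<delta>2 q02"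
      unfolding Q12_def by blast
    ultimately show ?thesis
      unfolding \<sigma>_def mem_Astates level
      using that x dstep_in_states[OF dfa1 f(1)] dstep_in_states[OF dfa2 f(2)] by simp
  qed
  have "Atrans (\<sigma> i) (x ! i) (\<sigma> (Suc i))" if i: "i < length x" for i
  proof -
    define q1 q2 where "q1 = dstep \<delta>1 f1 (bw (drop (Suc i) x))"
      and "q2 = dstep \<delta>2 f2 (bw (drop (Suc i) x))"
    have "bw (drop i x) = bw (drop (Suc i) x) @ [bar (x ! i)]"
      using i by (simp add: Cons_nth_drop_Suc[symmetric] bar_word_Cons)
    then have hit_i: "h i \<longleftrightarrow> \<delta>1 q1 (bar (x ! i)) \<in> F1 \<or> \<delta>2 q2 (bar (x ! i)) \<in> F2"
      unfolding h_def hit_after_def q1_def q2_def by (simp add: dstep_snoc)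
    have "\<sigma> i = ((run1 (take i x), run2 (take i x)),
        \<delta>1 q1 (bar (x ! i)), \<delta>2 q2 (bar (x ! i)), first_hit_level h i)"
      using \<open>bw (drop i x) = _\<close> unfolding \<sigma>_def q1_def q2_def by (simp add: dstep_snoc)
    moreover have "\<sigma> (Suc i) = ((\<delta>1 (run1 (take i x)) (x ! i), \<delta>2 (run2 (take i x)) (x ! i)),
        q1, q2, first_hit_level h (Suc i))"
      unfolding \<sigma>_def q1_def q2_def using i by (simp add: take_Suc_conv_app_nth dstep_snoc)
    moreover have "q1 \<in> Q1" "q2 \<in> Q2"
      unfolding q1_def q2_def
      using dstep_in_states[OF dfa1 f(1)] dstep_in_states[OF dfa2 f(2)] by simp_all
    moreover have "first_hit_level h i \<noteq> 0 \<longrightarrow> first_hit_level h i < \<kappa>"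
      using i x level by auto
    moreover note first_hit_level_Suc[of h i, unfolded hit_i]
    ultimately show ?thesis
      unfolding A_trans_def A_trans_level_iff
      using states[of i] states[of "Suc i"] i
      by (intro conjI exI[of _ "run1 (take i x)"] exI[of _ "run2 (take i x)"] exI[of _ q1]
          exI[of _ q2] exI[of _ "first_hit_level h i"] exI[of _ "first_hit_level h (Suc i)"])
        simp_all
  qed
  then have "nfa_path Atrans (\<sigma> 0) x (\<sigma> (length x))"
    by (rule nfa_path_of_steps)
  moreover have "\<sigma> 0 \<in> Ainit" and "\<sigma> (length x) \<in> Afinal"
    using states[of 0] states[of "length x"] x
    unfolding A_init_def A_final_def by (auto simp: \<sigma>_def level)
  ultimately show ?thesis
    unfolding A_lang_eq_paths by blast
qed

lemma A_lang_eq: "A_lang bar \<kappa> Q1 \<delta>1 q01 F1 Q2 \<delta>2 q02 F2 = {x. \<exists>\<beta>. minimal_split x \<beta>}"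
  using minimal_split_if_accepted accepted_if_minimal_split by blast

end

section \<open>Non-regularity\<close>

lemma finite_imp_length_bounded: "finite S \<Longrightarrow> \<exists>n. \<forall>w\<in>S. length w \<le> n"
  by (metis finite_imageI finite_nat_set_iff_bounded_le image_eqI)

text \<open>Cutting x between two prefixes with equal Nerode class and equal state keeps the word in H
  and makes it shorter than 2|x|; its hit, which the cut does not affect, then lies before
  position \<open>|x| - \<kappa>\<close>.\<close>

lemma early_hit_by_pumping:
  fixes H :: "'a list set" and f :: "'a list \<Rightarrow> 'c" and Q :: "'s set"
  assumes cl: "nerode_classifier H f" and dfa: "complete_dfa Q \<delta> q0 F"
    and long_hit: "\<And>V. V \<in> H \<Longrightarrow> N0 \<le> length V \<Longrightarrow>
       \<exists>j. 2 * (j + \<kappa>) \<le> length V \<and> dstep \<delta> q0 (take (length V - j) V) \<in> F"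
  obtains N where "\<And>x m z. N \<le> length x \<Longrightarrow> length m \<le> card Q \<Longrightarrow> length z = length x \<Longrightarrow>
     x @ m @ z \<in> H \<Longrightarrow>
     \<exists>j < length x - \<kappa>. dstep \<delta> q0 (take (length (x @ m @ z) - j) (x @ m @ z)) \<in> F"
proof -
  define c where "c u = (f u, dstep \<delta> q0 u)" for u
  have "q0 \<in> Q" and "finite Q"
    using dfa by (simp_all add: complete_dfa_def)
  then have "range c \<subseteq> range f \<times> Q"
    using dstep_in_states[OF dfa] by (auto simp: c_def)
  then have fin: "finite (range c)"
    by (rule finite_subset) (intro finite_cartesian_product nerode_classifier_finite_range[OF cl]
        \<open>finite Q\<close>)
  define K B where "K = card (range c)" and "B = card Q + 1"
  have "\<exists>j < length x - \<kappa>. dstep \<delta> q0 (take (length (x @ m @ z) - j) (x @ m @ z)) \<in> F"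
    if x: "\<kappa> + K * B + N0 + 1 \<le> length x" and m: "length m \<le> card Q"
      and z: "length z = length x" and mem: "x @ m @ z \<in> H" for x m z :: "'a list"
  proof -
    obtain i i' where "i < i'" "i' \<le> K" and same: "c (take (i * B) x) = c (take (i' * B) x)"
      using fin by (rule pigeonhole_less[of _ "\<lambda>i. c (take (i * B) x)" K]) (auto simp: K_def)
    define p p' where "p = i * B" and "p' = i' * B"
    have "p' \<le> K * B"
      unfolding p'_def using \<open>i' \<le> K\<close> by simp
    then have p': "p' \<le> length x"
      using x by linarith
    have "Suc i * B \<le> i' * B"
      using \<open>i < i'\<close> by (intro mult_le_mono1) simp
    then have gap: "p + B \<le> p'"
      unfolding p_def p'_def by simp
    define s where "s = drop p' x @ m @ z"
    define V where "V = take p x @ s"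
    have xmz: "x @ m @ z = take p' x @ s"
      unfolding s_def by simp
    have "f (take p x) = f (take p' x)" and run: "dstep \<delta> q0 (take p x) = dstep \<delta> q0 (take p' x)"
      using same unfolding c_def p_def p'_def by simp_all
    then have "V \<in> H"
      using mem nerode_classifierD[OF cl, of "take p x" "take p' x" s] unfolding V_def xmz by simp
    moreover have lenV: "length V = p + length s" and lens: "length s = 2 * length x - p' + length m"
      using gap p' z unfolding V_def s_def by simp_all
    moreover have "N0 \<le> length V"
      using lenV lens p' x by linarith
    ultimately obtain j where j: "2 * (j + \<kappa>) \<le> length V"
      and hit: "dstep \<delta> q0 (take (length V - j) V) \<in> F"
      using long_hit by blast
    have "length V < 2 * length x"
      using lenV lens gap m p' unfolding B_def by linarith
    then have "j < length x - \<kappa>"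
      using j by arith
    moreover have "j \<le> length s"
      using \<open>j < length x - \<kappa>\<close> lens p' by linarith
    moreover have "take (length V - j) V = take p x @ take (length s - j) s"
      and "take (length (x @ m @ z) - j) (x @ m @ z) = take p' x @ take (length s - j) s"
      using \<open>j \<le> length s\<close> gap p' unfolding V_def xmz by simp_all
    ultimately show ?thesis
      using hit run by (metis dstep_append)
  qed
  then show thesis
    using that[of "\<kappa> + K * B + N0 + 1"] by blast
qed

context hairpin_dfas
begin

lemma run1_hairpin_cut:
  assumes "run1 (x @ m) = run1 (x @ \<beta>)" and "j \<le> length x"
  shows "run1 (take (length (x @ m @ bw x) - j) (x @ m @ bw x)) = run1 (x @ \<beta> @ bw (drop j x))"
  using assms take_hairpin[OF assms(2), of m]
  by (metis append.assoc dstep_append)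

lemma not_regular_hairpin_if_finite_lang2:
  assumes arms: "infinite {x. \<exists>\<beta>. minimal_split x \<beta>}" and fin: "finite (dfa_lang \<delta>2 q02 F2)"
  shows "\<not> regular (hairpin bar \<kappa> lang1 lang2)"
proof
  define H where "H = {W. \<exists>j. hairpin_shape W j \<and> hit W j}"
  assume "regular (hairpin bar \<kappa> lang1 lang2)"
  then obtain f :: "'a list \<Rightarrow> nat" where cl: "nerode_classifier H f"
    unfolding hairpin_eq_hits H_def by (rule nerode_classifier_if_regular)
  obtain n where short: "\<And>w. run2 w \<in> F2 \<Longrightarrow> length w \<le> n"
    using finite_imp_length_bounded[OF fin] unfolding dfa_lang_def by blast
  \<comment> \<open>in long words, only the first automaton can produce hits\<close>
  have lang1_hit: "run1 (take (length W - j) W) \<in> F1" if "hit W j" "2 * j < length W" "2 * n < length W"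
    for W j
    using that short[of "take (length W - j) (bw W)"] unfolding hit_def by fastforce
  have "\<exists>j. 2 * (j + \<kappa>) \<le> length V \<and> run1 (take (length V - j) V) \<in> F1"
    if V: "V \<in> H" "2 * n + 1 \<le> length V" for V
  proof -
    obtain j where "hairpin_shape V j" and "hit V j"
      using V(1) unfolding H_def by blast
    have "2 * (j + \<kappa>) \<le> length V"
      using \<open>hairpin_shape V j\<close> by (rule hairpin_shape_length)
    moreover from this have "2 * j < length V"
      using kappa_pos by simp
    ultimately show ?thesis
      using lang1_hit \<open>hit V j\<close> V(2) by auto
  qed
  then obtain N where pump: "\<And>x m z. N \<le> length x \<Longrightarrow> length m \<le> card Q1 \<Longrightarrow>
      length z = length x \<Longrightarrow> x @ m @ z \<in> H \<Longrightarrow>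
      \<exists>j < length x - \<kappa>. run1 (take (length (x @ m @ z) - j) (x @ m @ z)) \<in> F1"
    using early_hit_by_pumping[OF cl dfa1] by blast
  obtain x \<beta> where x: "N + 2 * n + 1 \<le> length x" and split: "minimal_split x \<beta>"
    using infinite_imp_long_word[OF arms] by blast
  obtain m where m: "length m \<le> card Q1" and same: "run1 (x @ m) = run1 (x @ \<beta>)"
    using dstep_short_word[OF dfa1 dstep_in_states[OF dfa1 q0_in_states(1)], of x \<beta>]
    by (auto simp: dstep_append)
  define j0 where "j0 = length x - \<kappa>"
  have "j0 \<le> length x" and "hit (x @ \<beta> @ bw x) j0"
    using split unfolding minimal_split_def j0_def by simp_all
  moreover have "2 * j0 < length (x @ \<beta> @ bw x)" and "2 * n < length (x @ \<beta> @ bw x)"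
    using x kappa_pos unfolding j0_def by simp_all
  ultimately have "run1 (x @ \<beta> @ bw (drop j0 x)) \<in> F1"
    using lang1_hit take_hairpin by metis
  then have "hit (x @ m @ bw x) j0"
    unfolding hit_def using run1_hairpin_cut[OF same] by (simp add: j0_def)
  moreover have "hairpin_shape (x @ m @ bw x) j0"
    using split unfolding hairpin_shape_def minimal_split_def j0_def by auto
  ultimately have "x @ m @ bw x \<in> H"
    unfolding H_def by blast
  then obtain j where "j < j0" and "run1 (take (length (x @ m @ bw x) - j) (x @ m @ bw x)) \<in> F1"
    using pump[of x m "bw x"] x m unfolding j0_def by auto
  then have "hit (x @ \<beta> @ bw x) j"
    using run1_hairpin_cut[OF same, of j] hit_hairpin_iff[of j x \<beta>] by (simp add: j0_def)
  then show False
    using split \<open>j < j0\<close> unfolding minimal_split_def j0_def by blast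
qed

lemma hairpin_shape_bw: "hairpin_shape (bw W) j \<longleftrightarrow> hairpin_shape W j"
proof -
  have "hairpin_shape (bw W) j" if "hairpin_shape W j" for W
    using that unfolding hairpin_shape_def by (metis append.assoc bar_word_append bw_bw)
  then show ?thesis
    by (metis bw_bw)
qed

end

text \<open>Reversing words and exchanging the two automata is a symmetry of the construction.\<close>

sublocale hairpin_dfas \<subseteq> swapped: hairpin_dfas bar \<kappa> Q2 \<delta>2 q02 F2 Q1 \<delta>1 q01 F1
  by unfold_locales (simp_all add: bar_bar kappa_pos dfa1 dfa2)

context hairpin_dfas
begin

lemma swapped_hit: "swapped.hit W j \<longleftrightarrow> hit (bw W) j"
  unfolding swapped.hit_def hit_def by auto

lemma swapped_minimal_split: "swapped.minimal_split x \<beta> \<longleftrightarrow> minimal_split x (bw \<beta>)"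
  unfolding swapped.minimal_split_def minimal_split_def swapped_hit by simp

lemma swapped_hairpin: "hairpin bar \<kappa> swapped.lang1 swapped.lang2 = bw ` hairpin bar \<kappa> lang1 lang2"
  unfolding swapped.hairpin_eq_hits hairpin_eq_hits
  by (auto simp: mem_image_bw swapped_hit swapped.hairpin_shape_def hairpin_shape_bw
      simp flip: hairpin_shape_def)

lemma not_regular_hairpin_if_finite_lang1:
  assumes arms: "infinite {x. \<exists>\<beta>. minimal_split x \<beta>}" and fin: "finite lang1"
  shows "\<not> regular (hairpin bar \<kappa> lang1 lang2)"
proof
  assume "regular (hairpin bar \<kappa> lang1 lang2)"
  then have "regular (hairpin bar \<kappa> swapped.lang1 swapped.lang2)"
    unfolding swapped_hairpin by (rule regular_image_bw)
  moreover have "{x. \<exists>\<beta>. swapped.minimal_split x \<beta>} = {x. \<exists>\<beta>. minimal_split x \<beta>}"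
    unfolding swapped_minimal_split by (metis bw_bw)
  ultimately show False
    using swapped.not_regular_hairpin_if_finite_lang2 arms fin by simp
qed

end

theorem proposition1:
  fixes bar :: "'a::finite \<Rightarrow> 'a" and \<kappa> :: nat
    and L1 L2 :: "'a list set"
    and Q1 :: "'s1 set" and \<delta>1 :: "'s1 \<Rightarrow> 'a \<Rightarrow> 's1" and q01 :: 's1 and F1 :: "'s1 set"
    and Q2 :: "'s2 set" and \<delta>2 :: "'s2 \<Rightarrow> 'a \<Rightarrow> 's2" and q02 :: 's2 and F2 :: "'s2 set"
  assumes "card (UNIV :: 'a set) \<ge> 2"
    and "\<And>a. bar (bar a) = a"
    and "\<kappa> > 0"
    and "complete_dfa Q1 \<delta>1 q01 F1" and "dfa_lang \<delta>1 q01 F1 = L1"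
    and "complete_dfa Q2 \<delta>2 q02 F2" and "dfa_lang \<delta>2 q02 F2 = bar_lang bar L2"
  shows "(finite (A_lang bar \<kappa> Q1 \<delta>1 q01 F1 Q2 \<delta>2 q02 F2) \<longrightarrow> regular (hairpin bar \<kappa> L1 L2))
       \<and> (infinite (A_lang bar \<kappa> Q1 \<delta>1 q01 F1 Q2 \<delta>2 q02 F2) \<and> (finite L1 \<or> finite L2)
            \<longrightarrow> \<not> regular (hairpin bar \<kappa> L1 L2))"
proof -
  interpret hairpin_dfas bar \<kappa> Q1 \<delta>1 q01 F1 Q2 \<delta>2 q02 F2
    using assms(2-4,6) by unfold_locales
  have L1: "L1 = lang1" and L2: "L2 = lang2"
    using assms(5,7) by (simp_all add: bar_lang_def image_image)
  have "finite lang2 \<Longrightarrow> finite (dfa_lang \<delta>2 q02 F2)"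
    using finite_imageI[of lang2 bw] by (simp add: bar_lang_def image_image)
  then show ?thesis
    unfolding L1 L2 A_lang_eq
    using regular_hairpin_if_finite_arms not_regular_hairpin_if_finite_lang1
      not_regular_hairpin_if_finite_lang2 by blast
qed

end
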